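(* Let $G$ be a finite connected graph and let $e_1,\dots,e_c$ be its loop-edges. For $\underline n=(n_1,\dots,n_c)$ with each $n_i$ a positive integer, let $G^{(\underline n)}$ be the refinement of $G$ obtained by inserting $n_i$ new vertices in the interior of $e_i$ for each $i$, and let $\sigma^*:\operatorname{Div}(G)\to\operatorname{Div}(G^{(\underline n)})$ be the map extending divisors by $0$ on the new vertices. Then for every $D\in\operatorname{Div}(G)$, $$r^{\#}_G(D)=r_{G^{(\underline n)}}(\sigma^*D).$$
   Context: Graphs are finite and connected, loops and multiple edges allowed. $\operatorname{Div}(G)$ is the free abelian group on $V(G)$. Define $(v\cdot w)$ as the number of edges joining $v,w$ if $v\ne w$, and $(v\cdot v)=-\operatorname{val}(v)+2\operatorname{loop}(v)$ (valency with loops counted twice). $T_v=\sum_w(v\cdot w)w$, $\operatorname{Prin}(G)$ is the subgroup generated by the $T_v$, $D\sim D'$ iff $D-D'\in\operatorname{Prin}(G)$. The rank $r_G(D)$ is $-1$ if no effective divisor is equivalent to $D$, and otherwise the maximum $k\ge0$ such that for every effective $E$ of degree $k$ some effective divisor is equivalent to $D-E$. Let $\widehat G$ be the graph obtained from $G$ by inserting exactly one new vertex in the interior of every loop-edge, and $\sigma^*:\operatorname{Div}(G)\to\operatorname{Div}(\widehat G)$ extension by zero; define $r^{\#}_G(D):=r_{\widehat G}(\sigma^*D)$. *)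

theory Defs
  imports Main
begin

record ('v, 'e) mgraph =
  verts :: "'v set"
  edges :: "'e set"
  src :: "'e \<Rightarrow> 'v"
  tgt :: "'e \<Rightarrow> 'v"

definition is_loop :: "('v, 'e) mgraph \<Rightarrow> 'e \<Rightarrow> bool" where
  "is_loop G e \<longleftrightarrow> src G e = tgt G e"

definition adj_rel :: "('v, 'e) mgraph \<Rightarrow> ('v \<times> 'v) set" where
  "adj_rel G = {(src G e, tgt G e) | e. e \<in> edges G} \<union> {(tgt G e, src G e) | e. e \<in> edges G}"

definition finite_connected_graph :: "('v, 'e) mgraph \<Rightarrow> bool" where
  "finite_connected_graph G \<longleftrightarrow>
     finite (verts G) \<and> finite (edges G) \<and> verts G \<noteq> {} \<and>
     (\<forall>e \<in> edges G. src G e \<in> verts G \<and> tgt G e \<in> verts G) \<and>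
     (\<forall>v \<in> verts G. \<forall>w \<in> verts G. (v, w) \<in> (adj_rel G)\<^sup>*)"

definition loopnum :: "('v, 'e) mgraph \<Rightarrow> 'v \<Rightarrow> nat" where
  "loopnum G v = card {e \<in> edges G. src G e = v \<and> tgt G e = v}"

definition val :: "('v, 'e) mgraph \<Rightarrow> 'v \<Rightarrow> nat" where
  "val G v = card {e \<in> edges G. src G e = v \<and> tgt G e \<noteq> v}
           + card {e \<in> edges G. tgt G e = v \<and> src G e \<noteq> v}
           + 2 * loopnum G v"

definition inum :: "('v, 'e) mgraph \<Rightarrow> 'v \<Rightarrow> 'v \<Rightarrow> int" where
  "inum G v w = (if v \<noteq> w
      then int (card {e \<in> edges G. {src G e, tgt G e} = {v, w}})
      else - int (val G v) + 2 * int (loopnum G v))"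

definition Div :: "('v, 'e) mgraph \<Rightarrow> ('v \<Rightarrow> int) set" where
  "Div G = {D. \<forall>v. v \<notin> verts G \<longrightarrow> D v = 0}"

definition T :: "('v, 'e) mgraph \<Rightarrow> 'v \<Rightarrow> 'v \<Rightarrow> int" where
  "T G v = (\<lambda>w. if w \<in> verts G then inum G v w else 0)"

definition Prin :: "('v, 'e) mgraph \<Rightarrow> ('v \<Rightarrow> int) set" where
  "Prin G = {P. \<exists>c :: 'v \<Rightarrow> int. P = (\<lambda>w. \<Sum>v \<in> verts G. c v * T G v w)}"

definition lin_equiv :: "('v, 'e) mgraph \<Rightarrow> ('v \<Rightarrow> int) \<Rightarrow> ('v \<Rightarrow> int) \<Rightarrow> bool" where
  "lin_equiv G D D' \<longleftrightarrow> (\<lambda>v. D v - D' v) \<in> Prin G"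

definition effective :: "('v, 'e) mgraph \<Rightarrow> ('v \<Rightarrow> int) \<Rightarrow> bool" where
  "effective G E \<longleftrightarrow> E \<in> Div G \<and> (\<forall>v. E v \<ge> 0)"

definition deg :: "('v, 'e) mgraph \<Rightarrow> ('v \<Rightarrow> int) \<Rightarrow> int" where
  "deg G D = (\<Sum>v \<in> verts G. D v)"

definition rank :: "('v, 'e) mgraph \<Rightarrow> ('v \<Rightarrow> int) \<Rightarrow> int" where
  "rank G D = (if \<not> (\<exists>F. effective G F \<and> lin_equiv G F D) then -1
     else int (GREATEST k::nat. \<forall>E. effective G E \<and> deg G E = int k \<longrightarrow>
              (\<exists>F. effective G F \<and> lin_equiv G F (\<lambda>v. D v - E v))))"

text \<open>Refinement G^(n): insert n e new vertices Inr (e,1), ..., Inr (e, n e) in the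
  interior of each loop-edge e; the loop e becomes the path of edges
  (e,0), ..., (e, n e).\<close>
definition refine :: "('v, 'e) mgraph \<Rightarrow> ('e \<Rightarrow> nat) \<Rightarrow> ('v + 'e \<times> nat, 'e \<times> nat) mgraph" where
  "refine G n = \<lparr>
     verts = Inl ` verts G \<union>
             {Inr (e, j) | e j. e \<in> edges G \<and> is_loop G e \<and> 1 \<le> j \<and> j \<le> n e},
     edges = {(e, 0) | e. e \<in> edges G \<and> \<not> is_loop G e} \<union>
             {(e, k) | e k. e \<in> edges G \<and> is_loop G e \<and> k \<le> n e},
     src = (\<lambda>(e, k). if is_loop G e \<and> 0 < k then Inr (e, k) else Inl (src G e)),
     tgt = (\<lambda>(e, k). if is_loop G e \<and> k < n e then Inr (e, Suc k) else Inl (tgt G e)) \<rparr>"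

definition sigma_ext :: "('v \<Rightarrow> int) \<Rightarrow> ('v + 'e \<times> nat \<Rightarrow> int)" where
  "sigma_ext D = (\<lambda>x. case x of Inl v \<Rightarrow> D v | Inr _ \<Rightarrow> 0)"

text \<open>r^#_G(D) := rank on G-hat (one new vertex on each loop) of sigma^* D.\<close>
definition rank_sharp :: "('v, 'e) mgraph \<Rightarrow> ('v \<Rightarrow> int) \<Rightarrow> int" where
  "rank_sharp G D = rank (refine G (\<lambda>_. 1)) (sigma_ext D)"

end

theory Submission
  imports Defs
begin

text \<open>Subdivide one loop e0 at the vertex a into a cycle a, u 1, ..., u m of length N = m + 1.
  Firing cycle vertices moves the chips of the cycle to a, and the only information that
  survives is the moment, the sum of j times the number of chips at u j, modulo N.  Hence a
  divisor is equivalent to an effective one iff its push-forward to the contracted graph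
  (the cycle collapsed onto a), lowered by one chip at a when N does not divide the moment,
  is equivalent to an effective divisor there.  For divisors pulled back from G this expresses
  the rank through the contracted graph alone, so it does not depend on m; changing the
  subdivision one loop at a time gives the theorem.\<close>

definition chip :: "'x \<Rightarrow> 'x \<Rightarrow> int" where
  "chip x = (\<lambda>w. if w = x then 1 else 0)"

lemma sum_chip: "finite A \<Longrightarrow> x \<in> A \<Longrightarrow> (\<Sum>w\<in>A. chip x w) = 1"
  by (simp add: chip_def)

section \<open>Principal divisors and rank\<close>

lemma inum_sym: "inum H v w = inum H w v"
  unfolding inum_def by (auto simp: insert_commute)

lemma sum_inum_row_eq_0:
  assumes finV: "finite (verts H)" and finE: "finite (edges H)"
    and ends: "\<forall>e\<in>edges H. src H e \<in> verts H \<and> tgt H e \<in> verts H"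
    and v: "v \<in> verts H"
  shows "(\<Sum>w\<in>verts H. inum H v w) = 0"
proof -
  define A where "A w = {e \<in> edges H. {src H e, tgt H e} = {v, w}}" for w
  define B1 where "B1 = {e \<in> edges H. src H e = v \<and> tgt H e \<noteq> v}"
  define B2 where "B2 = {e \<in> edges H. tgt H e = v \<and> src H e \<noteq> v}"
  have U: "(\<Union>w\<in>verts H - {v}. A w) = B1 \<union> B2"
  proof
    show "(\<Union>w\<in>verts H - {v}. A w) \<subseteq> B1 \<union> B2"
      unfolding A_def B1_def B2_def by (auto simp: doubleton_eq_iff)
    show "B1 \<union> B2 \<subseteq> (\<Union>w\<in>verts H - {v}. A w)"
    proof
      fix e assume "e \<in> B1 \<union> B2"
      then have "e \<in> A (tgt H e) \<and> tgt H e \<in> verts H - {v} \<or> e \<in> A (src H e) \<and> src H e \<in> verts H - {v}"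
        using ends unfolding A_def B1_def B2_def by (auto simp: insert_commute)
      then show "e \<in> (\<Union>w\<in>verts H - {v}. A w)" by blast
    qed
  qed
  have "(\<Sum>w\<in>verts H - {v}. card (A w)) = card (\<Union>w\<in>verts H - {v}. A w)"
    by (rule card_UN_disjoint[symmetric]) (use finV finE in \<open>auto simp: A_def doubleton_eq_iff\<close>)
  also have "\<dots> = card B1 + card B2"
    unfolding U by (rule card_Un_disjoint) (use finE in \<open>auto simp: B1_def B2_def\<close>)
  finally have S: "(\<Sum>w\<in>verts H - {v}. card (A w)) = card B1 + card B2" .
  have "(\<Sum>w\<in>verts H. inum H v w) = inum H v v + (\<Sum>w\<in>verts H - {v}. inum H v w)"
    using finV v by (simp add: sum.remove)
  also have "(\<Sum>w\<in>verts H - {v}. inum H v w) = (\<Sum>w\<in>verts H - {v}. int (card (A w)))"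
    by (rule sum.cong) (auto simp: inum_def A_def)
  also have "\<dots> = int (card B1 + card B2)" using S by (metis of_nat_sum)
  finally show ?thesis
    by (simp add: inum_def val_def B1_def B2_def)
qed

lemma T_in_Prin: "v \<in> verts H \<Longrightarrow> finite (verts H) \<Longrightarrow> T H v \<in> Prin H"
  unfolding Prin_def
proof (rule CollectI, rule exI[of _ "chip v"], rule ext)
  fix w assume "v \<in> verts H" "finite (verts H)"
  then show "T H v w = (\<Sum>x\<in>verts H. chip v x * T H x w)"
    by (simp add: chip_def sum.delta if_distrib[where f = "\<lambda>c. c * _"] cong: if_cong)
qed

lemma Prin_zero: "(\<lambda>w. 0) \<in> Prin H"
  unfolding Prin_def by (rule CollectI, rule exI[of _ "\<lambda>v. 0"]) simp

lemma Prin_add: "P \<in> Prin H \<Longrightarrow> Q \<in> Prin H \<Longrightarrow> (\<lambda>w. P w + Q w) \<in> Prin H"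
  unfolding Prin_def
  apply clarify
  subgoal for c c' by (rule exI[of _ "\<lambda>v. c v + c' v"]) (auto simp: algebra_simps sum.distrib)
  done

lemma Prin_scale: "P \<in> Prin H \<Longrightarrow> (\<lambda>w. k * P w) \<in> Prin H"
  unfolding Prin_def
  apply clarify
  subgoal for c by (rule exI[of _ "\<lambda>v. k * c v"]) (auto simp: algebra_simps sum_distrib_left)
  done

lemma Prin_uminus: "P \<in> Prin H \<Longrightarrow> (\<lambda>w. - P w) \<in> Prin H"
  using Prin_scale[of P H "-1"] by simp

lemma Prin_diff: "P \<in> Prin H \<Longrightarrow> Q \<in> Prin H \<Longrightarrow> (\<lambda>w. P w - Q w) \<in> Prin H"
  using Prin_add[OF _ Prin_uminus] by simp

lemma Prin_cong: "P \<in> Prin H \<Longrightarrow> (\<And>w. P w = Q w) \<Longrightarrow> Q \<in> Prin H"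
  by (metis ext)

lemma Prin_sum:
  "finite I \<Longrightarrow> (\<And>i. i \<in> I \<Longrightarrow> P i \<in> Prin H) \<Longrightarrow> (\<lambda>w. \<Sum>i\<in>I. P i w) \<in> Prin H"
proof (induction I rule: finite_induct)
  case empty
  then show ?case using Prin_zero by simp
next
  case (insert x F)
  then show ?case using Prin_add[of "P x" H "\<lambda>w. \<Sum>i\<in>F. P i w"] by simp
qed

lemma inum_cong:
  assumes "edges H = edges H'" and "\<forall>x\<in>edges H. src H x = src H' x \<and> tgt H x = tgt H' x"
  shows "inum H = inum H'"
proof (intro ext)
  fix v w
  have S: "{e \<in> edges H. R (src H e) (tgt H e)} = {e \<in> edges H'. R (src H' e) (tgt H' e)}" for R
    using assms by auto
  show "inum H v w = inum H' v w"
    unfolding inum_def val_def loopnum_def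
    by (simp only: S[of "\<lambda>s t. {s, t} = {v, w}"] S[of "\<lambda>s t. s = v \<and> t \<noteq> v"]
      S[of "\<lambda>s t. t = v \<and> s \<noteq> v"] S[of "\<lambda>s t. s = v \<and> t = v"])
qed

lemma rank_cong:
  assumes "verts H = verts H'" "inum H = inum H'"
  shows "rank H D = rank H' D"
proof -
  have "T H = T H'" using assms unfolding T_def by (intro ext) simp
  then show ?thesis using assms unfolding rank_def effective_def Div_def lin_equiv_def Prin_def deg_def
    by simp
qed

lemma effective_deg_eq_0_iff:
  assumes "finite (verts H)" and "effective H E"
  shows "deg H E = 0 \<longleftrightarrow> E = (\<lambda>_. 0)"
  using assms sum_nonneg_eq_0_iff[of "verts H" E]
  by (auto simp: effective_def Div_def deg_def)

lemma rank_eq_GREATEST: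
  fixes H :: "('v, 'e) mgraph" and D :: "'v \<Rightarrow> int"
  assumes "finite (verts H)"
  defines "cond k \<equiv> \<forall>E. effective H E \<and> deg H E = int k \<longrightarrow>
                        (\<exists>F. effective H F \<and> lin_equiv H F (\<lambda>v. D v - E v))"
  shows "rank H D = (if \<not> cond 0 then -1 else int (GREATEST k. cond k))"
proof -
  have zero: "effective H (\<lambda>_. 0)" "deg H (\<lambda>_. 0) = int 0"
    by (simp_all add: effective_def Div_def deg_def)
  have "cond 0 \<longleftrightarrow> (\<exists>F. effective H F \<and> lin_equiv H F (\<lambda>v. D v - 0))"
  proof
    assume "cond 0"
    then show "\<exists>F. effective H F \<and> lin_equiv H F (\<lambda>v. D v - 0)"
      using zero unfolding cond_def by blast
  next
    assume "\<exists>F. effective H F \<and> lin_equiv H F (\<lambda>v. D v - 0)"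
    then show "cond 0"
      unfolding cond_def using effective_deg_eq_0_iff[OF assms(1)] by auto
  qed
  then show ?thesis unfolding rank_def cond_def by simp
qed

section \<open>Effectivity relative to an intersection matrix\<close>

definition equiv_effective_on :: "'x set \<Rightarrow> ('x \<Rightarrow> 'x \<Rightarrow> int) \<Rightarrow> ('x \<Rightarrow> int) \<Rightarrow> bool" where
  "equiv_effective_on W L Q \<longleftrightarrow> (\<exists>c. \<forall>w\<in>W. 0 \<le> Q w + (\<Sum>v\<in>W. c v * L v w))"

text \<open>The rank condition for the pulled-back divisor, read off on the graph with vertex set W
  (the subdivided loop contracted to its base point a): a divisor E on the subdivision with chips
  on the subdivided loop is seen on W as P with P a \<ge> 1, and costs an extra chip at a.\<close>
definition collapsed_rank_cond ::
    "'x set \<Rightarrow> ('x \<Rightarrow> 'x \<Rightarrow> int) \<Rightarrow> 'x \<Rightarrow> ('x \<Rightarrow> int) \<Rightarrow> nat \<Rightarrow> bool" where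
  "collapsed_rank_cond W L a D k \<longleftrightarrow>
     (\<forall>P. (\<forall>w. w \<notin> W \<longrightarrow> P w = 0) \<and> (\<forall>w. 0 \<le> P w) \<and> (\<Sum>w\<in>W. P w) = int k \<longrightarrow>
        equiv_effective_on W L (\<lambda>w. D w - P w) \<and>
        (1 \<le> P a \<longrightarrow> equiv_effective_on W L (\<lambda>w. D w - P w - chip a w)))"

lemma equiv_effective_on_cong:
  "(\<And>w. w \<in> W \<Longrightarrow> Q w = Q' w) \<Longrightarrow> equiv_effective_on W L Q = equiv_effective_on W L Q'"
  unfolding equiv_effective_on_def by auto

lemma equiv_effective_on_cong_matrix:
  assumes "\<And>v w. v \<in> W \<Longrightarrow> w \<in> W \<Longrightarrow> L v w = L' v w"
  shows "equiv_effective_on W L Q = equiv_effective_on W L' Q"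
proof -
  have "(\<Sum>v\<in>W. c v * L v w) = (\<Sum>v\<in>W. c v * L' v w)" if "w \<in> W" for c w
    using assms that by (intro sum.cong) auto
  then show ?thesis unfolding equiv_effective_on_def by (simp cong: ball_cong)
qed

lemma collapsed_rank_cond_cong_matrix:
  "(\<And>v w. v \<in> W \<Longrightarrow> w \<in> W \<Longrightarrow> L v w = L' v w) \<Longrightarrow>
     collapsed_rank_cond W L a D k = collapsed_rank_cond W L' a D k"
  unfolding collapsed_rank_cond_def using equiv_effective_on_cong_matrix[of W L L'] by simp

section \<open>Subdividing a single loop\<close>

lemma refine_simps:
  "verts (refine G n) = Inl ` verts G \<union> {Inr (e, j) | e j. e \<in> edges G \<and> is_loop G e \<and> 1 \<le> j \<and> j \<le> n e}"
  "edges (refine G n) = {(e, 0) | e. e \<in> edges G \<and> \<not> is_loop G e} \<union>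
             {(e, k) | e k. e \<in> edges G \<and> is_loop G e \<and> k \<le> n e}"
  "src (refine G n) (e, k) = (if is_loop G e \<and> 0 < k then Inr (e, k) else Inl (src G e))"
  "tgt (refine G n) (e, k) = (if is_loop G e \<and> k < n e then Inr (e, Suc k) else Inl (tgt G e))"
  by (simp_all add: refine_def)

text \<open>The cycle replacing e0 is cyc 0 = a, cyc j = u j for 1 \<le> j \<le> m, cyc N = a; the set W
  consists of all vertices of the subdivision except the u j.\<close>
locale loop_subdivision =
  fixes G :: "('v, 'e) mgraph" and n :: "'e \<Rightarrow> nat" and e0 :: 'e
  assumes finV: "finite (verts G)" and finE: "finite (edges G)"
    and ends: "\<forall>e\<in>edges G. src G e \<in> verts G \<and> tgt G e \<in> verts G"
    and e0E: "e0 \<in> edges G" and e0loop: "is_loop G e0" and npos: "0 < n e0"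
begin

abbreviation "H \<equiv> refine G n"
definition "a = (Inl (src G e0) :: 'v + 'e \<times> nat)"
definition "m = n e0"
definition "N = Suc m"
definition "u j = (Inr (e0, j) :: 'v + 'e \<times> nat)"
definition "cyc j = (if j = 0 \<or> j = N then a else u j)"
definition "V = verts H"
definition "U = u ` {1..m}"
definition "W = V - U"

lemma m_pos: "1 \<le> m" using npos by (simp add: m_def)

lemma tgt_e0_G: "tgt G e0 = src G e0" using e0loop by (simp add: is_loop_def)

lemma finite_V: "finite V"
proof -
  have "{Inr (e, j) | e j. e \<in> edges G \<and> is_loop G e \<and> 1 \<le> j \<and> j \<le> n e}
     \<subseteq> (\<lambda>(e,j). Inr (e,j)) ` (SIGMA e:edges G. {..n e})" by auto
  moreover have "finite ((\<lambda>(e,j). Inr (e,j)) ` (SIGMA e:edges G. {..n e}))"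
    using finE by auto
  ultimately show ?thesis unfolding V_def refine_simps using finV finite_subset by auto
qed

lemma finite_edges_H: "finite (edges H)"
proof -
  have "edges H \<subseteq> (SIGMA e:edges G. {..n e})" unfolding refine_simps by auto
  then show ?thesis using finE finite_subset by blast
qed

lemma mem_edges_H: "(e, k) \<in> edges H \<longleftrightarrow> e \<in> edges G \<and> ((\<not> is_loop G e \<and> k = 0) \<or> (is_loop G e \<and> k \<le> n e))"
  unfolding refine_simps by auto

lemma ends_H: "\<forall>e\<in>edges H. src H e \<in> V \<and> tgt H e \<in> V"
proof
  fix x assume x: "x \<in> edges H"
  obtain e k where xe: "x = (e,k)" by force
  from x ends show "src H x \<in> V \<and> tgt H x \<in> V"
    unfolding xe V_def refine_simps by (auto simp: is_loop_def)
qed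

lemma u_inj: "u i = u j \<longleftrightarrow> i = j" by (simp add: u_def)
lemma u_ne_a: "u j \<noteq> a" by (simp add: u_def a_def)
lemma a_ne_u: "a \<noteq> u j" by (simp add: u_def a_def)

lemma u_V: "1 \<le> j \<Longrightarrow> j \<le> m \<Longrightarrow> u j \<in> V"
  unfolding V_def refine_simps u_def m_def using e0E e0loop by auto
lemma a_V: "a \<in> V"
  unfolding V_def refine_simps a_def using e0E ends by auto
lemma cyc_V: "k \<le> N \<Longrightarrow> cyc k \<in> V"
  unfolding cyc_def N_def using u_V a_V by auto
lemma a_W: "a \<in> W"
  unfolding W_def U_def using a_V a_ne_u by blast
lemma u_U: "1 \<le> j \<Longrightarrow> j \<le> m \<Longrightarrow> u j \<in> U" unfolding U_def by auto
lemma u_notW: "u j \<notin> W" unfolding W_def U_def V_def refine_simps u_def m_def by auto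

lemma cyc_eq_u: "k \<le> N \<Longrightarrow> 1 \<le> j \<Longrightarrow> j \<le> m \<Longrightarrow> cyc k = u j \<longleftrightarrow> k = j"
  unfolding cyc_def N_def by (auto simp: u_inj u_ne_a a_ne_u)

lemma cyc_u: "1 \<le> j \<Longrightarrow> j \<le> m \<Longrightarrow> cyc j = u j"
  unfolding cyc_def N_def by auto

lemma src_e0: "k \<le> m \<Longrightarrow> src H (e0, k) = cyc k"
  unfolding refine_simps cyc_def N_def using e0loop by (auto simp: u_def a_def)

lemma tgt_e0: "k \<le> m \<Longrightarrow> tgt H (e0, k) = cyc (Suc k)"
  unfolding refine_simps cyc_def N_def using e0loop by (auto simp: u_def a_def m_def tgt_e0_G)

lemma e0_edge: "k \<le> m \<Longrightarrow> (e0, k) \<in> edges H"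
  using e0E e0loop by (simp add: mem_edges_H m_def)

lemma src_u: "x \<in> edges H \<Longrightarrow> 1 \<le> j \<Longrightarrow> src H x = u j \<longleftrightarrow> x = (e0, j)"
proof -
  assume "x \<in> edges H" "1 \<le> j"
  obtain e k where xe: "x = (e,k)" by force
  show ?thesis unfolding xe refine_simps u_def using e0loop \<open>1 \<le> j\<close> by auto
qed

lemma tgt_u: "x \<in> edges H \<Longrightarrow> 1 \<le> j \<Longrightarrow> j \<le> m \<Longrightarrow> tgt H x = u j \<longleftrightarrow> x = (e0, j - 1)"
proof -
  assume "x \<in> edges H" "1 \<le> j" "j \<le> m"
  obtain e k where xe: "x = (e,k)" by force
  show ?thesis unfolding xe refine_simps u_def using e0loop \<open>1 \<le> j\<close> \<open>j \<le> m\<close>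
    by (auto simp: m_def)
qed

lemma inum_u:
  assumes j: "1 \<le> j" "j \<le> m"
  shows "inum H (u j) w = chip (cyc (j - 1)) w + chip (cyc (Suc j)) w - 2 * chip (u j) w"
proof -
  have E1: "(e0, j) \<in> edges H" "(e0, j - 1) \<in> edges H" using e0_edge j by auto
  have s1: "src H (e0, j) = u j" using src_e0[of j] j cyc_u by auto
  have t1: "tgt H (e0, j) = cyc (Suc j)" using tgt_e0 j by auto
  have s0: "src H (e0, j - 1) = cyc (j - 1)" using src_e0[of "j-1"] j by auto
  have t0: "tgt H (e0, j - 1) = u j" using tgt_e0[of "j-1"] j cyc_u by auto
  have pn: "cyc (Suc j) \<noteq> u j" using cyc_eq_u[of "Suc j" j] j by (simp add: N_def)
  have pp: "cyc (j - 1) \<noteq> u j" using cyc_eq_u[of "j - 1" j] j by (simp add: N_def)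
  have ne: "(e0, j) \<noteq> (e0, j - 1)" using j by auto
  show ?thesis
  proof (cases "w = u j")
    case True
    have l: "{e \<in> edges H. src H e = u j \<and> tgt H e = u j} = {}"
      using src_u[of _ j] j t1 pn by auto
    have c1: "{e \<in> edges H. src H e = u j \<and> tgt H e \<noteq> u j} = {(e0, j)}"
      using src_u[of _ j] j t1 pn E1 s1 by auto
    have c2: "{e \<in> edges H. tgt H e = u j \<and> src H e \<noteq> u j} = {(e0, j - 1)}"
      using tgt_u[of _ j] j s0 pp E1 t0 by auto
    show ?thesis using True pn pp
      by (simp add: inum_def val_def loopnum_def l c1 c2 chip_def)
  next
    case False
    have "{e \<in> edges H. {src H e, tgt H e} = {u j, w}} =
          (if cyc (Suc j) = w then {(e0, j)} else {}) \<union> (if cyc (j - 1) = w then {(e0, j - 1)} else {})"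
      (is "?L = ?R")
    proof
      show "?L \<subseteq> ?R"
      proof
        fix x assume x: "x \<in> ?L"
        then have xE: "x \<in> edges H" by simp
        from x False have "(src H x = u j \<and> tgt H x = w) \<or> (tgt H x = u j \<and> src H x = w)"
          by (auto simp: doubleton_eq_iff)
        then show "x \<in> ?R"
        proof
          assume "src H x = u j \<and> tgt H x = w"
          then show ?thesis using src_u[OF xE, of j] j t1 by auto
        next
          assume "tgt H x = u j \<and> src H x = w"
          then show ?thesis using tgt_u[OF xE, of j] j s0 by auto
        qed
      qed
      show "?R \<subseteq> ?L" using E1 s1 t1 s0 t0 by (auto simp: insert_commute)
    qed
    then show ?thesis using False ne
      by (auto simp: inum_def chip_def card_insert_if)
  qed
qed

lemma finite_W: "finite W" using finite_V by (simp add: W_def)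

lemma V_split: "V = W \<union> U" "W \<inter> U = {}" "U \<subseteq> V"
  using u_V by (auto simp: W_def U_def)

lemma sum_V_split: "(\<Sum>w\<in>V. f w) = (\<Sum>w\<in>W. f w) + (\<Sum>j=1..m. f (u j))"
proof -
  have "(\<Sum>w\<in>V. f w) = (\<Sum>w\<in>W. f w) + (\<Sum>w\<in>U. f w)"
    using V_split finite_V sum.union_disjoint[of W U f] finite_W
    by (metis finite_Un)
  moreover have "(\<Sum>w\<in>U. f w) = (\<Sum>j=1..m. f (u j))"
    unfolding U_def by (rule sum.reindex_cong[where l=u]) (auto simp: inj_on_def u_inj)
  ultimately show ?thesis by simp
qed

lemma sum_W_only_a: "(\<And>v. v \<in> W \<Longrightarrow> v \<noteq> a \<Longrightarrow> f v = 0) \<Longrightarrow> (\<Sum>v\<in>W. f v) = f a"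
  using finite_W a_W by (simp add: sum.remove sum.neutral)

lemma cyc_cases: "k \<le> N \<Longrightarrow> cyc k = a \<or> (\<exists>i. 1 \<le> i \<and> i \<le> m \<and> cyc k = u i)"
proof -
  assume k: "k \<le> N"
  show ?thesis
  proof (cases "k = 0 \<or> k = N")
    case True then show ?thesis by (simp add: cyc_def)
  next
    case False then have "1 \<le> k" "k \<le> m" "cyc k = u k" using k by (auto simp: cyc_def N_def)
    then show ?thesis by blast
  qed
qed

lemma cyc_notW: "k \<le> N \<Longrightarrow> v \<in> W \<Longrightarrow> v \<noteq> a \<Longrightarrow> cyc k \<noteq> v"
proof
  assume k: "k \<le> N" and v: "v \<in> W" "v \<noteq> a" and p: "cyc k = v"
  from cyc_cases[OF k] show False
  proof
    assume "cyc k = a" then show False using p v by simp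
  next
    assume "\<exists>i. 1 \<le> i \<and> i \<le> m \<and> cyc k = u i"
    then obtain i where "cyc k = u i" by blast
    then show False using p v u_notW by metis
  qed
qed

lemma T_u: "1 \<le> j \<Longrightarrow> j \<le> m \<Longrightarrow>
   T H (u j) w = chip (cyc (j - 1)) w + chip (cyc (Suc j)) w - 2 * chip (u j) w"
proof -
  assume j: "1 \<le> j" "j \<le> m"
  have "cyc (j - 1) \<in> V" "cyc (Suc j) \<in> V" "u j \<in> V"
    using cyc_V u_V j by (auto simp: N_def)
  then show ?thesis using inum_u[OF j] unfolding T_def V_def by (auto simp: chip_def)
qed

lemma inum_u_W: "1 \<le> j \<Longrightarrow> j \<le> m \<Longrightarrow> v \<in> W \<Longrightarrow> v \<noteq> a \<Longrightarrow> inum H (u j) v = 0"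
proof -
  assume j: "1 \<le> j" "j \<le> m" and v: "v \<in> W" "v \<noteq> a"
  have "cyc (j - 1) \<noteq> v" "cyc (Suc j) \<noteq> v" using cyc_notW v j by (auto simp: N_def)
  moreover have "u j \<noteq> v" using u_notW v by metis
  ultimately show ?thesis using inum_u[OF j, of v] by (simp add: chip_def)
qed

lemma T_W_u: "1 \<le> j \<Longrightarrow> j \<le> m \<Longrightarrow> v \<in> W \<Longrightarrow> v \<noteq> a \<Longrightarrow> T H v (u j) = 0"
  using inum_u_W[of j v] inum_sym[of H v "u j"] u_V[of j] by (simp add: T_def V_def)

lemma T_u_W: "1 \<le> j \<Longrightarrow> j \<le> m \<Longrightarrow> v \<in> W \<Longrightarrow> v \<noteq> a \<Longrightarrow> T H (u j) v = 0"
  using inum_u_W by (simp add: T_def V_def)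

lemma T_sym: "v \<in> V \<Longrightarrow> w \<in> V \<Longrightarrow> T H v w = T H w v"
  using inum_sym by (simp add: T_def V_def)

lemma T_out: "w \<notin> V \<Longrightarrow> T H v w = 0" by (simp add: T_def V_def)

lemma sum_T_row_eq_0: "v \<in> V \<Longrightarrow> (\<Sum>w\<in>V. T H v w) = 0"
  using sum_inum_row_eq_0[of H v] finite_V finite_edges_H ends_H by (simp add: T_def V_def)

lemma T_H_in_Prin: "v \<in> V \<Longrightarrow> T H v \<in> Prin H"
  using T_in_Prin finite_V by (simp add: V_def)

section \<open>Push-forward, moment and the contracted intersection matrix\<close>

text \<open>On W, L is the intersection matrix of the graph obtained by contracting the cycle onto a
  (lemmas L_off and L_diag).\<close>
definition "push F w = F w + (if w = a then (\<Sum>j=1..m. F (u j)) else 0)"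
definition "moment F = (\<Sum>j=1..m. int j * F (u j))"
definition "L v w = push (T H v) w"

lemma sum_chip_cyc: "k \<le> N \<Longrightarrow> (\<Sum>j=1..m. f j * chip (cyc k) (u j)) = (if 1 \<le> k \<and> k \<le> m then f k else 0)"
proof -
  assume k: "k \<le> N"
  have "(\<Sum>j=1..m. f j * chip (cyc k) (u j)) = (\<Sum>j=1..m. if j = k then f j else 0)"
  proof (rule sum.cong)
    fix j assume "j \<in> {1..m}"
    then show "f j * chip (cyc k) (u j) = (if j = k then f j else 0)"
      using cyc_eq_u[OF k, of j] by (auto simp: chip_def)
  qed simp
  then show ?thesis by (simp add: sum.delta)
qed

lemma sum_chip_u: "1 \<le> i \<Longrightarrow> i \<le> m \<Longrightarrow> (\<Sum>j=1..m. f j * chip (u i) (u j)) = f i"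
proof -
  assume i: "1 \<le> i" "i \<le> m"
  have "(\<Sum>j=1..m. f j * chip (u i) (u j)) = (\<Sum>j=1..m. if j = i then f j else 0)"
    by (rule sum.cong) (auto simp: chip_def u_inj)
  then show ?thesis using i by (simp add: sum.delta)
qed

lemma V_cases: "v \<in> V \<Longrightarrow> (v \<in> W \<and> v \<noteq> a) \<or> v = a \<or> (\<exists>i. 1 \<le> i \<and> i \<le> m \<and> v = u i)"
proof -
  assume v: "v \<in> V"
  show ?thesis
  proof (cases "v \<in> W")
    case False
    then have "v \<in> U" using v by (simp add: W_def)
    then show ?thesis unfolding U_def by auto
  qed simp
qed

lemma T_a_u: "1 \<le> j \<Longrightarrow> j \<le> m \<Longrightarrow> T H a (u j) = chip (u 1) (u j) + chip (u m) (u j)"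
proof -
  assume j: "1 \<le> j" "j \<le> m"
  have "T H a (u j) = T H (u j) a" using a_V u_V j by (intro T_sym) auto
  also have "\<dots> = chip (cyc (j - 1)) a + chip (cyc (Suc j)) a" using T_u[OF j] by (simp add: chip_def a_ne_u)
  finally have 1: "T H a (u j) = chip (cyc (j - 1)) a + chip (cyc (Suc j)) a" .
  have 2: "chip (cyc (j - 1)) a = chip (u 1) (u j)"
    using j by (cases "j = 1") (auto simp: chip_def cyc_def N_def u_ne_a a_ne_u u_inj)
  have 3: "chip (cyc (Suc j)) a = chip (u m) (u j)"
    using j by (cases "j = m") (auto simp: chip_def cyc_def N_def u_ne_a a_ne_u u_inj)
  show ?thesis using 1 2 3 by simp
qed

lemma moment_T_a: "moment (T H a) = int N"
proof -
  have "moment (T H a) = (\<Sum>j=1..m. int j * chip (u 1) (u j) + int j * chip (u m) (u j))"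
    unfolding moment_def by (rule sum.cong) (auto simp: T_a_u algebra_simps)
  also have "\<dots> = (\<Sum>j=1..m. int j * chip (u 1) (u j)) + (\<Sum>j=1..m. int j * chip (u m) (u j))"
    by (rule sum.distrib)
  also have "(\<Sum>j=1..m. int j * chip (u 1) (u j)) = 1" using sum_chip_u[of 1 int] m_pos by simp
  also have "(\<Sum>j=1..m. int j * chip (u m) (u j)) = int m" using sum_chip_u[of m int] m_pos by simp
  finally show ?thesis by (simp add: N_def)
qed

lemma moment_T_u: "1 \<le> i \<Longrightarrow> i \<le> m \<Longrightarrow> moment (T H (u i)) = (if i = m then - int N else 0)"
proof -
  assume i: "1 \<le> i" "i \<le> m"
  have "moment (T H (u i)) = (\<Sum>j=1..m. int j * chip (cyc (i - 1)) (u j) + int j * chip (cyc (Suc i)) (u j)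
        - 2 * (int j * chip (u i) (u j)))"
    unfolding moment_def T_u[OF i] by (intro sum.cong) (auto simp: algebra_simps)
  also have "\<dots> = (\<Sum>j=1..m. int j * chip (cyc (i - 1)) (u j)) + (\<Sum>j=1..m. int j * chip (cyc (Suc i)) (u j))
        - 2 * (\<Sum>j=1..m. int j * chip (u i) (u j))"
    by (simp add: sum.distrib sum_subtractf sum_distrib_left)
  also have "(\<Sum>j=1..m. int j * chip (cyc (i - 1)) (u j)) = int (i - 1)"
    using sum_chip_cyc[of "i - 1" int] i by (cases "i = 1") (auto simp: N_def)
  also have "(\<Sum>j=1..m. int j * chip (cyc (Suc i)) (u j)) = (if Suc i \<le> m then int (Suc i) else 0)"
    using sum_chip_cyc[of "Suc i" int] i by (simp add: N_def)
  also have "(\<Sum>j=1..m. int j * chip (u i) (u j)) = int i" using sum_chip_u[OF i, of int] by simp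
  finally show ?thesis using i by (auto simp: N_def)
qed

lemma dvd_moment_T: "v \<in> V \<Longrightarrow> int N dvd moment (T H v)"
proof -
  assume v: "v \<in> V"
  from V_cases[OF v] show ?thesis
  proof (elim disjE exE conjE)
    assume "v \<in> W" "v \<noteq> a"
    then have "moment (T H v) = 0" unfolding moment_def using T_W_u by simp
    then show ?thesis by simp
  next
    assume "v = a" then show ?thesis using moment_T_a by simp
  next
    fix i assume "1 \<le> i" "i \<le> m" "v = u i"
    then show ?thesis using moment_T_u by simp
  qed
qed

lemma Prin_V: "P \<in> Prin H \<longleftrightarrow> (\<exists>c. P = (\<lambda>w. \<Sum>v\<in>V. c v * T H v w))"
  by (simp add: Prin_def V_def)

lemma dvd_moment_Prin: "P \<in> Prin H \<Longrightarrow> int N dvd moment P"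
proof -
  assume "P \<in> Prin H"
  then obtain c where P: "P = (\<lambda>w. \<Sum>v\<in>V. c v * T H v w)" by (auto simp: Prin_V)
  have "moment P = (\<Sum>v\<in>V. c v * moment (T H v))"
    unfolding P moment_def by (simp add: sum_distrib_left sum.swap[of _ V] algebra_simps)
  also have "int N dvd \<dots>"
    by (rule dvd_sum) (use dvd_moment_T in auto)
  finally show ?thesis .
qed

lemma push_comb_T: "push (\<lambda>w. \<Sum>v\<in>V. c v * T H v w) w = (\<Sum>v\<in>V. c v * push (T H v) w)"
  unfolding push_def by (simp add: sum_distrib_left sum.swap[of _ V] algebra_simps sum.distrib)

lemma push_T_u: "1 \<le> j \<Longrightarrow> j \<le> m \<Longrightarrow> w \<in> W \<Longrightarrow> push (T H (u j)) w = 0"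
proof -
  assume j: "1 \<le> j" "j \<le> m" and w: "w \<in> W"
  show ?thesis
  proof (cases "w = a")
    case True
    have "(\<Sum>w\<in>V. T H (u j) w) = 0" using sum_T_row_eq_0 u_V j by auto
    moreover have "(\<Sum>w\<in>W. T H (u j) w) = T H (u j) a" by (rule sum_W_only_a) (use T_u_W j in auto)
    ultimately show ?thesis using True unfolding push_def sum_V_split by simp
  next
    case False
    then show ?thesis using T_u_W j w by (simp add: push_def)
  qed
qed

lemma L_row: "v \<in> W \<Longrightarrow> (\<Sum>w\<in>W. L v w) = 0"
proof -
  assume v: "v \<in> W"
  have "(\<Sum>w\<in>W. L v w) = (\<Sum>w\<in>W. T H v w) + (\<Sum>w\<in>W. if w = a then (\<Sum>j=1..m. T H v (u j)) else 0)"
    unfolding L_def push_def by (simp add: sum.distrib)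
  also have "(\<Sum>w\<in>W. if w = a then (\<Sum>j=1..m. T H v (u j)) else 0) = (\<Sum>j=1..m. T H v (u j))"
    using finite_W a_W by (simp add: sum.delta)
  also have "(\<Sum>w\<in>W. T H v w) + (\<Sum>j=1..m. T H v (u j)) = (\<Sum>w\<in>V. T H v w)" by (simp add: sum_V_split)
  also have "\<dots> = 0" using sum_T_row_eq_0 v by (simp add: W_def)
  finally show ?thesis .
qed

lemma L_off: "v \<in> W \<Longrightarrow> w \<in> W \<Longrightarrow> v \<noteq> w \<Longrightarrow> L v w = inum H v w"
proof -
  assume v: "v \<in> W" and w: "w \<in> W" and vw: "v \<noteq> w"
  have wV: "w \<in> V" using w by (simp add: W_def)
  show ?thesis
  proof (cases "w = a")
    case True
    then have "v \<noteq> a" using vw by simp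
    then have "(\<Sum>j=1..m. T H v (u j)) = 0" using T_W_u v by simp
    then show ?thesis using wV True by (simp add: L_def push_def T_def V_def)
  next
    case False
    then show ?thesis using wV by (simp add: L_def push_def T_def V_def)
  qed
qed

lemma L_diag: "v \<in> W \<Longrightarrow> L v v = - (\<Sum>w\<in>W - {v}. L v w)"
  using L_row[of v] finite_W by (simp add: sum.remove)

definition "lift c v = (if v \<in> U then c a else c v)"

lemma sum_lift_T_W:
  assumes w: "w \<in> W"
  shows "(\<Sum>v\<in>V. lift c v * T H v w) = (\<Sum>v\<in>W. c v * L v w)"
proof -
  have U: "u j \<in> U" if "j \<in> {1..m}" for j using that u_U by auto
  have "(\<Sum>v\<in>V. lift c v * T H v w) =
        (\<Sum>v\<in>W. c v * T H v w) + (\<Sum>j=1..m. c a * T H (u j) w)"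
    unfolding sum_V_split using U u_notW by (auto intro!: sum.cong simp: W_def lift_def)
  also have "(\<Sum>j=1..m. c a * T H (u j) w) = (if w = a then c a * (\<Sum>j=1..m. T H a (u j)) else 0)"
  proof (cases "w = a")
    case True
    have "T H (u j) a = T H a (u j)" if "j \<in> {1..m}" for j using that u_V a_V by (intro T_sym) auto
    then show ?thesis using True by (simp add: sum_distrib_left)
  next
    case False
    then show ?thesis using T_u_W w by simp
  qed
  also have "(if w = a then c a * (\<Sum>j=1..m. T H a (u j)) else 0) =
      (\<Sum>v\<in>W. c v * (if w = a then (\<Sum>j=1..m. T H v (u j)) else 0))"
  proof (cases "w = a")
    case True
    have "(\<Sum>v\<in>W. c v * (\<Sum>j=1..m. T H v (u j))) = c a * (\<Sum>j=1..m. T H a (u j))"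
      by (rule sum_W_only_a) (use T_W_u in auto)
    then show ?thesis using True by simp
  qed simp
  finally show ?thesis
    unfolding L_def push_def by (simp add: algebra_simps sum.distrib)
qed

lemma sum_lift_T_u:
  assumes i: "1 \<le> i" "i \<le> m"
  shows "(\<Sum>v\<in>V. lift c v * T H v (u i)) = 0"
proof -
  have U: "u j \<in> U" if "j \<in> {1..m}" for j using that u_U by auto
  have "(\<Sum>v\<in>V. lift c v * T H v (u i)) =
        (\<Sum>v\<in>W. c v * T H v (u i)) + (\<Sum>j=1..m. c a * T H (u j) (u i))"
    unfolding sum_V_split using U u_notW by (auto intro!: sum.cong simp: W_def lift_def)
  also have "(\<Sum>v\<in>W. c v * T H v (u i)) = c a * T H a (u i)"
    by (rule sum_W_only_a) (use T_W_u i in auto)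
  also have "c a * T H a (u i) + (\<Sum>j=1..m. c a * T H (u j) (u i)) =
     c a * ((\<Sum>v\<in>W. T H v (u i)) + (\<Sum>j=1..m. T H (u j) (u i)))"
    using sum_W_only_a[of "\<lambda>v. T H v (u i)"] T_W_u i by (simp add: sum_distrib_left algebra_simps)
  also have "(\<Sum>v\<in>W. T H v (u i)) + (\<Sum>j=1..m. T H (u j) (u i)) = (\<Sum>v\<in>V. T H v (u i))"
    by (simp add: sum_V_split)
  also have "\<dots> = (\<Sum>v\<in>V. T H (u i) v)"
    by (rule sum.cong) (use T_sym u_V i in auto)
  also have "\<dots> = 0" using sum_T_row_eq_0 u_V i by auto
  finally show ?thesis by simp
qed

section \<open>Normal forms\<close>

text \<open>Modulo principal divisors, the j-th vertex of the cycle is a + j (u 1 - a); going once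
  around the cycle shows that N (u 1 - a) is principal.\<close>
definition "rot w = chip (u 1) w - chip a w"
definition "cyc_lin j w = chip a w + int j * rot w"

lemma chip_cyc_minus_cyc_lin_in_Prin: "j \<le> N \<Longrightarrow> (\<lambda>w. chip (cyc j) w - cyc_lin j w) \<in> Prin H"
proof (induction j rule: less_induct)
  case (less j)
  consider "j = 0" | "j = 1" | i where "j = Suc (Suc i)"
    by (metis One_nat_def not0_implies_Suc)
  then show ?case
  proof cases
    case 1
    then show ?thesis using Prin_zero by (simp add: cyc_def cyc_lin_def rot_def)
  next
    case 2
    then show ?thesis using Prin_zero m_pos by (simp add: cyc_def cyc_lin_def rot_def N_def)
  next
    case 3
    have i: "1 \<le> Suc i" "Suc i \<le> m" using less.prems 3 by (auto simp: N_def)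
    have IH: "(\<lambda>w. chip (cyc i) w - cyc_lin i w) \<in> Prin H"
      "(\<lambda>w. chip (cyc (Suc i)) w - cyc_lin (Suc i) w) \<in> Prin H"
      using less 3 by auto
    have "(\<lambda>w. T H (u (Suc i)) w - (chip (cyc i) w - cyc_lin i w)
              + 2 * (chip (cyc (Suc i)) w - cyc_lin (Suc i) w)) \<in> Prin H"
      using Prin_add[OF Prin_diff[OF T_H_in_Prin[OF u_V[OF i]] IH(1)] Prin_scale[OF IH(2), of 2]] by simp
    then show ?thesis
      by (rule Prin_cong) (simp add: 3 T_u[OF i] cyc_u[OF i] cyc_lin_def algebra_simps)
  qed
qed

lemma N_rot_in_Prin: "(\<lambda>w. int N * rot w) \<in> Prin H"
proof -
  have "cyc N = a" by (simp add: cyc_def)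
  then show ?thesis
    using Prin_uminus[OF chip_cyc_minus_cyc_lin_in_Prin[of N]] by (simp add: cyc_lin_def)
qed

definition "residue F = nat (moment F mod int N)"

text \<open>Every divisor is equivalent to its restriction to W with the loop chips pushed to a,
  except that one chip of a is moved to the cycle vertex recording the moment modulo N.\<close>
definition "normal_form F w = (if w \<in> W then push F w else 0) - chip a w + chip (cyc (residue F)) w"

lemma residue_less: "residue F < N"
  unfolding residue_def by (simp add: N_def nat_less_iff)

lemma residue_eq_0_iff: "residue F = 0 \<longleftrightarrow> int N dvd moment F"
proof -
  have "0 \<le> moment F mod int N" by (simp add: N_def)
  then show ?thesis unfolding residue_def by (auto simp: dvd_eq_mod_eq_0)
qed

lemma Div_H_split:
  assumes "F \<in> Div H"
  shows "F w = (if w \<in> W then F w else 0) + (\<Sum>j=1..m. F (u j) * chip (u j) w)"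
proof (cases "w \<in> U")
  case True
  then obtain i where i: "i \<in> {1..m}" "w = u i" by (auto simp: U_def)
  have "(\<Sum>j=1..m. F (u j) * chip (u j) w) = (\<Sum>j=1..m. if j = i then F (u j) else 0)"
    by (rule sum.cong) (auto simp: i chip_def u_inj)
  then show ?thesis using i u_notW by simp
next
  case False
  then have "chip (u j) w = 0" if "j \<in> {1..m}" for j using that u_U by (auto simp: chip_def)
  moreover have "w \<notin> W \<Longrightarrow> F w = 0" using False assms by (auto simp: Div_def W_def V_def)
  ultimately show ?thesis by simp
qed

lemma diff_normal_form_in_Prin:
  assumes F: "F \<in> Div H"
  shows "(\<lambda>w. F w - normal_form F w) \<in> Prin H"
proof -
  define r where "r = residue F"
  define q where "q = moment F div int N"
  have "0 \<le> moment F mod int N" by (simp add: N_def)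
  then have moment_eq: "moment F = q * int N + int r"
    unfolding q_def r_def residue_def by simp
  have "(\<lambda>w. \<Sum>j\<in>{1..m}. F (u j) * (chip (cyc j) w - cyc_lin j w)) \<in> Prin H"
  proof (rule Prin_sum)
    fix j assume "j \<in> {1..m}"
    then show "(\<lambda>w. F (u j) * (chip (cyc j) w - cyc_lin j w)) \<in> Prin H"
      by (intro Prin_scale chip_cyc_minus_cyc_lin_in_Prin) (simp add: N_def)
  qed simp
  moreover have "(\<lambda>w. q * (int N * rot w)) \<in> Prin H"
    using Prin_scale[OF N_rot_in_Prin] by simp
  moreover have "(\<lambda>w. - (chip (cyc r) w - cyc_lin r w)) \<in> Prin H"
    using Prin_uminus[OF chip_cyc_minus_cyc_lin_in_Prin[of r]] residue_less[of F] by (simp add: r_def)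
  ultimately have "(\<lambda>w. (\<Sum>j\<in>{1..m}. F (u j) * (chip (cyc j) w - cyc_lin j w)) + q * (int N * rot w)
      + - (chip (cyc r) w - cyc_lin r w)) \<in> Prin H"
    by (intro Prin_add)
  then show ?thesis
  proof (rule Prin_cong)
    fix w
    have "(\<Sum>j\<in>{1..m}. F (u j) * (chip (cyc j) w - cyc_lin j w)) =
       (\<Sum>j\<in>{1..m}. F (u j) * chip (u j) w) - (\<Sum>j\<in>{1..m}. F (u j)) * chip a w - moment F * rot w"
      by (simp add: cyc_u cyc_lin_def moment_def algebra_simps sum_subtractf sum.distrib
          sum_distrib_left sum_distrib_right)
    moreover have "normal_form F w = (if w \<in> W then F w else 0)
        + chip a w * (\<Sum>j\<in>{1..m}. F (u j)) - chip a w + chip (cyc r) w"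
      unfolding normal_form_def r_def push_def using a_W by (auto simp: chip_def)
    ultimately show "(\<Sum>j\<in>{1..m}. F (u j) * (chip (cyc j) w - cyc_lin j w)) + q * (int N * rot w)
        + - (chip (cyc r) w - cyc_lin r w) = F w - normal_form F w"
      using Div_H_split[OF F, of w] moment_eq by (simp add: cyc_lin_def algebra_simps)
  qed
qed

lemma normal_form_W:
  "w \<in> W \<Longrightarrow> normal_form F w = push F w - (if int N dvd moment F then 0 else chip a w)"
  using residue_less[of F] u_notW[of "residue F"]
  by (auto simp: normal_form_def cyc_def chip_def residue_eq_0_iff[symmetric])

lemma normal_form_u: "1 \<le> i \<Longrightarrow> i \<le> m \<Longrightarrow> normal_form F (u i) = chip (cyc (residue F)) (u i)"
  using u_notW u_ne_a by (simp add: normal_form_def chip_def)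

lemma normal_form_outside: "w \<notin> V \<Longrightarrow> normal_form F w = 0"
  using a_V cyc_V[OF less_imp_le[OF residue_less]] by (auto simp: normal_form_def chip_def W_def)

section \<open>Equivalence to an effective divisor\<close>

lemma push_diff:
  fixes F F' :: "'v + 'e \<times> nat \<Rightarrow> int"
  shows "push (\<lambda>v. F v - F' v) w = push F w - push F' w"
  using sum_subtractf[of "\<lambda>j. F (u j)" "\<lambda>j. F' (u j)" "{1..m}"] by (simp add: push_def)

lemma moment_diff:
  fixes F F' :: "'v + 'e \<times> nat \<Rightarrow> int"
  shows "moment (\<lambda>v. F v - F' v) = moment F - moment F'"
  unfolding moment_def by (simp add: sum_subtractf algebra_simps)

lemma push_comb_T_W:
  "w \<in> W \<Longrightarrow> push (\<lambda>w. \<Sum>v\<in>V. c v * T H v w) w = (\<Sum>v\<in>W. c v * L v w)"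
proof -
  assume "w \<in> W"
  have "push (\<lambda>w. \<Sum>v\<in>V. c v * T H v w) w = (\<Sum>v\<in>V. c v * push (T H v) w)"
    by (rule push_comb_T)
  also have "\<dots> = (\<Sum>v\<in>W. c v * push (T H v) w) + (\<Sum>j=1..m. c (u j) * push (T H (u j)) w)"
    by (rule sum_V_split)
  finally show ?thesis using push_T_u \<open>w \<in> W\<close> by (simp add: L_def)
qed

lemma dvd_moment_iff_lin_equiv:
  "lin_equiv H F' F \<Longrightarrow> int N dvd moment F' \<longleftrightarrow> int N dvd moment F"
proof -
  assume "lin_equiv H F' F"
  then have "int N dvd moment F' - moment F"
    using dvd_moment_Prin[of "\<lambda>v. F' v - F v"] by (simp add: lin_equiv_def moment_diff)
  then show ?thesis by (metis diff_add_cancel dvd_add_right_iff)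
qed

lemma one_le_sum_u_if_not_dvd_moment:
  assumes nonneg: "\<forall>w. 0 \<le> F w" and "\<not> int N dvd moment F"
  shows "1 \<le> (\<Sum>j=1..m. F (u j))"
proof -
  have "\<exists>j\<in>{1..m}. F (u j) \<noteq> 0"
  proof (rule ccontr)
    assume "\<not> ?thesis"
    then have "moment F = 0" unfolding moment_def by simp
    then show False using assms(2) by simp
  qed
  then obtain j where j: "j \<in> {1..m}" "F (u j) \<noteq> 0" by blast
  have "F (u j) \<le> (\<Sum>j=1..m. F (u j))"
    by (rule member_le_sum) (use nonneg j in auto)
  moreover have "1 \<le> F (u j)" using nonneg j(2) by (metis int_one_le_iff_zero_less less_le)
  ultimately show ?thesis by linarith
qed

lemma push_lower_bound:
  assumes nonneg: "\<forall>w. 0 \<le> F w"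
  shows "0 \<le> push F w - (if int N dvd moment F then 0 else chip a w)"
proof -
  have "0 \<le> (\<Sum>j=1..m. F (u j))" using nonneg by (simp add: sum_nonneg)
  then show ?thesis
    using nonneg one_le_sum_u_if_not_dvd_moment[OF nonneg] by (auto simp: push_def chip_def add_increasing)
qed

lemma equiv_effective_on_if_exists_effective_equiv:
  assumes "effective H F'" and "lin_equiv H F' F"
  shows "equiv_effective_on W L (\<lambda>w. push F w - (if int N dvd moment F then 0 else chip a w))"
proof -
  obtain c where c: "(\<lambda>v. F' v - F v) = (\<lambda>w. \<Sum>v\<in>V. c v * T H v w)"
    using assms(2) by (auto simp: lin_equiv_def Prin_V)
  have push_eq: "push F' w = push F w + (\<Sum>v\<in>W. c v * L v w)" if "w \<in> W" for w
    using push_comb_T_W[OF that, of c] push_diff[of F' F w] unfolding c[symmetric] by simp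
  have bound: "0 \<le> push F' w - (if int N dvd moment F then 0 else chip a w)" for w
    using push_lower_bound[of F' w] assms by (simp add: effective_def dvd_moment_iff_lin_equiv)
  have "\<forall>w\<in>W. 0 \<le> push F w - (if int N dvd moment F then 0 else chip a w)
      + (\<Sum>v\<in>W. c v * L v w)"
    using push_eq bound by (metis add_diff_eq diff_add_eq)
  then show ?thesis unfolding equiv_effective_on_def by blast
qed

lemma exists_effective_equiv_if_equiv_effective_on:
  assumes F: "F \<in> Div H"
    and "equiv_effective_on W L (\<lambda>w. push F w - (if int N dvd moment F then 0 else chip a w))"
  shows "\<exists>F'. effective H F' \<and> lin_equiv H F' F"
proof -
  obtain c where c: "\<And>w. w \<in> W \<Longrightarrow>
      0 \<le> push F w - (if int N dvd moment F then 0 else chip a w) + (\<Sum>v\<in>W. c v * L v w)"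
    using assms(2) unfolding equiv_effective_on_def by blast
  define F' where "F' w = normal_form F w + (\<Sum>v\<in>V. lift c v * T H v w)" for w
  have "(\<lambda>w. - (F w - normal_form F w) + (\<Sum>v\<in>V. lift c v * T H v w)) \<in> Prin H"
    using Prin_add[OF Prin_uminus[OF diff_normal_form_in_Prin[OF F]]] by (auto simp: Prin_V)
  then have "lin_equiv H F' F"
    unfolding lin_equiv_def by (rule Prin_cong) (simp add: F'_def)
  moreover have "0 \<le> F' w" for w
  proof -
    consider "w \<in> W" | i where "1 \<le> i" "i \<le> m" "w = u i" | "w \<notin> V"
      using V_cases a_W by metis
    then show ?thesis
    proof cases
      case 1
      then show ?thesis using c by (simp add: F'_def normal_form_W sum_lift_T_W)
    next
      case 2
      then show ?thesis by (simp add: F'_def normal_form_u sum_lift_T_u chip_def)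
    qed (simp add: F'_def normal_form_outside T_out)
  qed
  moreover have "F' w = 0" if "w \<notin> verts H" for w
    using that by (simp add: F'_def normal_form_outside T_out V_def)
  ultimately show ?thesis by (auto simp: effective_def Div_def)
qed

lemma exists_effective_equiv_iff:
  "F \<in> Div H \<Longrightarrow> (\<exists>F'. effective H F' \<and> lin_equiv H F' F) \<longleftrightarrow>
     equiv_effective_on W L (\<lambda>w. push F w - (if int N dvd moment F then 0 else chip a w))"
  using equiv_effective_on_if_exists_effective_equiv exists_effective_equiv_if_equiv_effective_on
  by blast

section \<open>Divisors pulled back from G\<close>

lemma sigma_ext_in_Div: "D \<in> Div G \<Longrightarrow> sigma_ext D \<in> Div H"
  unfolding Div_def refine_simps by (auto simp: sigma_ext_def split: sum.splits)

lemma sigma_ext_u: "sigma_ext D (u j) = 0"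
  by (simp add: sigma_ext_def u_def)

lemma deg_H: "deg H E = (\<Sum>w\<in>V. E w)"
  by (simp add: deg_def V_def)

definition "collapse E w = (if w \<in> W then push E w else 0)"

lemma sum_W_collapse: "(\<Sum>w\<in>W. collapse E w) = deg H E"
  using finite_W a_W
  by (simp add: collapse_def push_def deg_H sum_V_split sum.distrib)

lemma collapse_nonneg:
  fixes E :: "'v + 'e \<times> nat \<Rightarrow> int"
  shows "\<forall>w. 0 \<le> E w \<Longrightarrow> 0 \<le> collapse E w"
  by (simp add: collapse_def push_def sum_nonneg)

lemma collapse_W_supported: "\<forall>w. w \<notin> W \<longrightarrow> P w = 0 \<Longrightarrow> collapse P = P"
  using u_notW by (auto simp: collapse_def push_def)

lemma W_supported_in_Div: "\<forall>w. w \<notin> W \<longrightarrow> P w = 0 \<Longrightarrow> P \<in> Div H"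
  by (simp add: Div_def W_def V_def)

lemma moment_W_supported: "\<forall>w. w \<notin> W \<longrightarrow> P w = 0 \<Longrightarrow> moment P = 0"
  using u_notW by (simp add: moment_def)

text \<open>Moving one chip of P from a onto the loop keeps the collapse but makes the moment 1;
  this realises the second clause of collapsed_rank_cond.\<close>
definition "lift_chip P w = P w - chip a w + chip (u 1) w"

lemma lift_chip_in_Div: "P \<in> Div H \<Longrightarrow> lift_chip P \<in> Div H"
  using a_V u_V[of 1] m_pos by (auto simp: Div_def lift_chip_def chip_def V_def)

lemma deg_lift_chip: "deg H (lift_chip P) = deg H P"
  using a_V u_V[of 1] m_pos finite_V
  by (simp add: deg_H lift_chip_def sum.distrib sum_subtractf sum_chip)

lemma moment_lift_chip:
  assumes "\<forall>w. w \<notin> W \<longrightarrow> P w = 0"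
  shows "moment (lift_chip P) = 1"
proof -
  have "moment (lift_chip P) = (\<Sum>j=1..m. int j * chip (u 1) (u j))"
    unfolding moment_def lift_chip_def using assms u_notW by (simp add: chip_def u_ne_a)
  then show ?thesis using sum_chip_u[of 1 int] m_pos by simp
qed

lemma collapse_lift_chip: "\<forall>w. w \<notin> W \<longrightarrow> P w = 0 \<Longrightarrow> collapse (lift_chip P) = P"
  using u_notW m_pos
  by (auto simp: collapse_def push_def lift_chip_def chip_def u_ne_a u_inj sum.delta)

lemma exists_effective_equiv_sigma_diff_iff:
  assumes "D \<in> Div G" and "E \<in> Div H"
  shows "(\<exists>F. effective H F \<and> lin_equiv H F (\<lambda>v. sigma_ext D v - E v)) \<longleftrightarrow>
     equiv_effective_on W L
       (\<lambda>w. sigma_ext D w - collapse E w - (if int N dvd moment E then 0 else chip a w))"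
proof -
  have diff_Div: "(\<lambda>v. sigma_ext D v - E v) \<in> Div H"
    using sigma_ext_in_Div[OF assms(1)] assms(2) by (auto simp: Div_def)
  have moment_eq: "moment (\<lambda>v. sigma_ext D v - E v) = - moment E"
    by (simp add: moment_diff moment_def sigma_ext_u)
  have push_eq: "push (\<lambda>v. sigma_ext D v - E v) w = sigma_ext D w - collapse E w" if "w \<in> W" for w
    using that by (simp add: push_diff collapse_def push_def sigma_ext_u)
  show ?thesis
    unfolding exists_effective_equiv_iff[OF diff_Div] moment_eq
    by (rule equiv_effective_on_cong) (simp add: push_eq)
qed

lemma rank_cond_iff_collapsed_rank_cond:
  assumes D: "D \<in> Div G"
  shows "(\<forall>E. effective H E \<and> deg H E = int k \<longrightarrow>
            (\<exists>F. effective H F \<and> lin_equiv H F (\<lambda>v. sigma_ext D v - E v)))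
     \<longleftrightarrow> collapsed_rank_cond W L a (sigma_ext D) k" (is "?rank \<longleftrightarrow> _")
proof
  assume rank: ?rank
  show "collapsed_rank_cond W L a (sigma_ext D) k"
    unfolding collapsed_rank_cond_def
  proof (intro allI impI conjI)
    fix P :: "'v + 'e \<times> nat \<Rightarrow> int"
    assume P: "(\<forall>w. w \<notin> W \<longrightarrow> P w = 0) \<and> (\<forall>w. 0 \<le> P w) \<and> (\<Sum>w\<in>W. P w) = int k"
    then have P_Div: "P \<in> Div H" and deg_P: "deg H P = int k"
      using W_supported_in_Div sum_W_collapse[of P] collapse_W_supported[of P] by auto
    have "\<exists>F. effective H F \<and> lin_equiv H F (\<lambda>v. sigma_ext D v - P v)"
      using rank P P_Div deg_P by (simp add: effective_def)
    then show "equiv_effective_on W L (\<lambda>w. sigma_ext D w - P w)"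
      using P by (simp add: exists_effective_equiv_sigma_diff_iff[OF D P_Div]
          collapse_W_supported moment_W_supported)
    assume "1 \<le> P a"
    then have "effective H (lift_chip P)"
      using P lift_chip_in_Div[OF P_Div] a_ne_u
      by (auto simp: effective_def lift_chip_def chip_def)
    then have "\<exists>F. effective H F \<and> lin_equiv H F (\<lambda>v. sigma_ext D v - lift_chip P v)"
      using rank deg_P by (simp add: deg_lift_chip)
    moreover have "\<not> int N dvd 1" using m_pos by (simp add: N_def)
    ultimately show "equiv_effective_on W L (\<lambda>w. sigma_ext D w - P w - chip a w)"
      using P by (simp add: exists_effective_equiv_sigma_diff_iff[OF D lift_chip_in_Div[OF P_Div]]
          collapse_lift_chip moment_lift_chip)
  qed
next
  assume cond: "collapsed_rank_cond W L a (sigma_ext D) k"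
  show ?rank
  proof (intro allI impI)
    fix E assume E: "effective H E \<and> deg H E = int k"
    then have E_Div: "E \<in> Div H" and nonneg: "\<forall>w. 0 \<le> E w" by (auto simp: effective_def)
    have P: "(\<forall>w. w \<notin> W \<longrightarrow> collapse E w = 0) \<and> (\<forall>w. 0 \<le> collapse E w)
        \<and> (\<Sum>w\<in>W. collapse E w) = int k"
      using E collapse_nonneg[OF nonneg] sum_W_collapse[of E] by (auto simp: collapse_def)
    have "1 \<le> collapse E a" if "\<not> int N dvd moment E"
      using one_le_sum_u_if_not_dvd_moment[OF nonneg that] nonneg[rule_format, of a] a_W
      by (simp add: collapse_def push_def)
    then show "\<exists>F. effective H F \<and> lin_equiv H F (\<lambda>v. sigma_ext D v - E v)"
      using cond P unfolding exists_effective_equiv_sigma_diff_iff[OF D E_Div] collapsed_rank_cond_def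
      by (cases "int N dvd moment E") auto
  qed
qed

lemma rank_sigma_ext:
  assumes "D \<in> Div G"
  shows "rank H (sigma_ext D) = (if \<not> collapsed_rank_cond W L a (sigma_ext D) 0 then -1
     else int (GREATEST k. collapsed_rank_cond W L a (sigma_ext D) k))"
  unfolding rank_eq_GREATEST[OF finite_V[unfolded V_def]] rank_cond_iff_collapsed_rank_cond[OF assms]
  by (rule refl)

section \<open>Independence of the subdivision\<close>

lemma W_eq:
  "W = Inl ` verts G \<union> {Inr (e, j) | e j. e \<in> edges G \<and> is_loop G e \<and> e \<noteq> e0 \<and> 1 \<le> j \<and> j \<le> n e}"
proof (rule set_eqI)
  fix x :: "'v + 'e \<times> nat"
  show "x \<in> W \<longleftrightarrow> x \<in> Inl ` verts G \<union>
      {Inr (e, j) | e j. e \<in> edges G \<and> is_loop G e \<and> e \<noteq> e0 \<and> 1 \<le> j \<and> j \<le> n e}"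
  proof (cases x)
    case (Inr z)
    obtain e j where z: "z = (e, j)" by (cases z)
    show ?thesis
      unfolding Inr z W_def U_def V_def refine_simps u_def m_def by (cases "e = e0") auto
  qed (auto simp: W_def U_def V_def refine_simps u_def)
qed

lemma loop_edge_meets_U: "(e0, k) \<in> edges H \<Longrightarrow> src H (e0, k) \<in> U \<or> tgt H (e0, k) \<in> U"
proof -
  assume "(e0, k) \<in> edges H"
  then have k: "k \<le> m" using e0loop by (simp add: mem_edges_H m_def)
  show ?thesis
  proof (cases "k = 0")
    case True
    then have "tgt H (e0, k) = u 1" using tgt_e0[of 0] cyc_u[of 1] m_pos by simp
    then show ?thesis using u_U[of 1] m_pos by simp
  next
    case False
    then have "src H (e0, k) = u k" using src_e0[OF k] cyc_u[of k] k by simp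
    then show ?thesis using u_U[of k] False k by simp
  qed
qed

lemma inum_W_off_loop:
  assumes "v \<in> W" "w \<in> W" "v \<noteq> w"
  shows "inum H v w = int (card {x \<in> edges H. fst x \<noteq> e0 \<and> {src H x, tgt H x} = {v, w}})"
proof -
  have "fst x \<noteq> e0" if x: "x \<in> edges H" "{src H x, tgt H x} = {v, w}" for x
  proof
    assume "fst x = e0"
    then obtain k where "x = (e0, k)" by (cases x) auto
    then have "src H x \<in> U \<or> tgt H x \<in> U" using loop_edge_meets_U x(1) by simp
    moreover have "src H x \<in> W" "tgt H x \<in> W" using x(2) assms(1,2) by (auto simp: doubleton_eq_iff)
    ultimately show False by (auto simp: W_def)
  qed
  then have "{x \<in> edges H. {src H x, tgt H x} = {v, w}} =
      {x \<in> edges H. fst x \<noteq> e0 \<and> {src H x, tgt H x} = {v, w}}"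
    by blast
  then show ?thesis using assms(3) by (simp add: inum_def)
qed

end

lemma refine_off_loop_eq:
  fixes G :: "('v, 'e) mgraph"
  assumes "\<forall>e\<in>edges G. e \<noteq> e0 \<longrightarrow> n e = n' e"
  shows "{x \<in> edges (refine G n). fst x \<noteq> e0 \<and> R (src (refine G n) x) (tgt (refine G n) x)} =
         {x \<in> edges (refine G n'). fst x \<noteq> e0 \<and> R (src (refine G n') x) (tgt (refine G n') x)}"
proof (rule set_eqI)
  fix x :: "'e \<times> nat"
  obtain e k where x: "x = (e, k)" by (cases x)
  show "x \<in> {x \<in> edges (refine G n). fst x \<noteq> e0 \<and> R (src (refine G n) x) (tgt (refine G n) x)} \<longleftrightarrow>
        x \<in> {x \<in> edges (refine G n'). fst x \<noteq> e0 \<and> R (src (refine G n') x) (tgt (refine G n') x)}"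
  proof (cases "e \<in> edges G \<and> e \<noteq> e0")
    case True
    then have "(e, k) \<in> edges (refine G n) \<longleftrightarrow> (e, k) \<in> edges (refine G n')"
      "src (refine G n) (e, k) = src (refine G n') (e, k)"
      "tgt (refine G n) (e, k) = tgt (refine G n') (e, k)"
      using assms unfolding refine_simps by auto
    then show ?thesis by (simp add: x)
  next
    case False
    then have "x \<notin> {x \<in> edges (refine G n). fst x \<noteq> e0}" "x \<notin> {x \<in> edges (refine G n'). fst x \<noteq> e0}"
      unfolding x refine_simps by auto
    then show ?thesis by blast
  qed
qed

text \<open>The collapsed data W, a and L do not depend on the number of vertices inserted in e0.\<close>
lemma rank_refine_eq_if_differ_on_one_loop:
  assumes A: "loop_subdivision G n e0" and B: "loop_subdivision G n' e0"
    and agree: "\<forall>e\<in>edges G. e \<noteq> e0 \<longrightarrow> n e = n' e"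
    and D: "D \<in> Div G"
  shows "rank (refine G n) (sigma_ext D) = rank (refine G n') (sigma_ext D)"
proof -
  interpret A: loop_subdivision G n e0 by (rule A)
  interpret B: loop_subdivision G n' e0 by (rule B)
  have "(\<lambda>e j. e \<in> edges G \<and> is_loop G e \<and> e \<noteq> e0 \<and> 1 \<le> j \<and> j \<le> n e) =
      (\<lambda>e j. e \<in> edges G \<and> is_loop G e \<and> e \<noteq> e0 \<and> 1 \<le> j \<and> j \<le> n' e)"
    using agree by (intro ext) auto
  then have same_W: "A.W = B.W"
    unfolding A.W_eq B.W_eq by metis
  have off_diag: "A.L v w = B.L v w" if "v \<in> A.W" "w \<in> A.W" "v \<noteq> w" for v w
    using that same_W A.L_off B.L_off A.inum_W_off_loop B.inum_W_off_loop
      refine_off_loop_eq[OF agree, of "\<lambda>s t. {s, t} = {v, w}"] by simp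
  have L_eq: "A.L v w = B.L v w" if "v \<in> A.W" "w \<in> A.W" for v w
  proof (cases "v = w")
    case True
    have "(\<Sum>x\<in>A.W - {v}. A.L v x) = (\<Sum>x\<in>B.W - {v}. B.L v x)"
      unfolding same_W[symmetric] using off_diag that by (intro sum.cong) auto
    then show ?thesis using A.L_diag B.L_diag that True same_W by simp
  qed (use off_diag that in simp)
  have "collapsed_rank_cond A.W A.L A.a (sigma_ext D) = collapsed_rank_cond B.W B.L B.a (sigma_ext D)"
    unfolding same_W[symmetric] by (rule ext, rule collapsed_rank_cond_cong_matrix, rule L_eq)
  then show ?thesis using A.rank_sigma_ext[OF D] B.rank_sigma_ext[OF D] by simp
qed

lemma rank_refine_cong:
  assumes "\<forall>e\<in>edges G. is_loop G e \<longrightarrow> n e = n' e"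
  shows "rank (refine G n) D = rank (refine G n') D"
proof (rule rank_cong)
  have "(\<lambda>e j. e \<in> edges G \<and> is_loop G e \<and> 1 \<le> j \<and> j \<le> n e) =
      (\<lambda>e j. e \<in> edges G \<and> is_loop G e \<and> 1 \<le> j \<and> j \<le> n' e)"
    using assms by (intro ext) auto
  then show "verts (refine G n) = verts (refine G n')" unfolding refine_simps by metis
  have "(\<lambda>e k. e \<in> edges G \<and> is_loop G e \<and> k \<le> n e) = (\<lambda>e k. e \<in> edges G \<and> is_loop G e \<and> k \<le> n' e)"
    using assms by (intro ext) auto
  then have "edges (refine G n) = edges (refine G n')" unfolding refine_simps by metis
  moreover have "\<forall>x\<in>edges (refine G n). src (refine G n) x = src (refine G n') x \<and>
      tgt (refine G n) x = tgt (refine G n') x"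
  proof
    fix x assume x: "x \<in> edges (refine G n)"
    obtain e k where xe: "x = (e, k)" by (cases x)
    have "e \<in> edges G" using x unfolding xe refine_simps by auto
    then show "src (refine G n) x = src (refine G n') x \<and> tgt (refine G n) x = tgt (refine G n') x"
      using assms unfolding xe refine_simps by auto
  qed
  ultimately show "inum (refine G n) = inum (refine G n')" by (rule inum_cong)
qed

lemma rank_refine_eq_if_agree_off:
  assumes finV: "finite (verts G)" and finE: "finite (edges G)"
    and ends: "\<forall>e\<in>edges G. src G e \<in> verts G \<and> tgt G e \<in> verts G"
    and D: "D \<in> Div G"
    and S: "finite S" "S \<subseteq> {e \<in> edges G. is_loop G e}"
    and pos: "\<forall>e\<in>edges G. is_loop G e \<longrightarrow> 0 < n e" "\<forall>e\<in>edges G. is_loop G e \<longrightarrow> 0 < n' e"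
    and agree: "\<forall>e\<in>edges G. is_loop G e \<and> e \<notin> S \<longrightarrow> n e = n' e"
  shows "rank (refine G n) (sigma_ext D) = rank (refine G n') (sigma_ext D)"
  using S pos(2) agree
proof (induction S arbitrary: n' rule: finite_induct)
  case empty
  then show ?case by (intro rank_refine_cong) simp
next
  case (insert e0 S)
  define n'' where "n'' = n'(e0 := n e0)"
  have e0: "e0 \<in> edges G" "is_loop G e0" using insert.prems(1) by auto
  have "rank (refine G n) (sigma_ext D) = rank (refine G n'') (sigma_ext D)"
    using insert pos(1) by (intro insert.IH) (auto simp: n''_def)
  also have "\<dots> = rank (refine G n') (sigma_ext D)"
  proof (rule rank_refine_eq_if_differ_on_one_loop)
    show "loop_subdivision G n'' e0" "loop_subdivision G n' e0"
      using finV finE ends e0 pos(1) insert.prems(2) by unfold_locales (auto simp: n''_def)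
  qed (use D in \<open>auto simp: n''_def\<close>)
  finally show ?case .
qed

theorem proposition3p4:
  fixes G :: "('v, 'e) mgraph" and n :: "'e \<Rightarrow> nat" and D :: "'v \<Rightarrow> int"
  assumes "finite_connected_graph G"
    and "\<forall>e \<in> edges G. is_loop G e \<longrightarrow> 0 < n e"
    and "D \<in> Div G"
  shows "rank_sharp G D = rank (refine G n) (sigma_ext D)"
  unfolding rank_sharp_def
proof (rule rank_refine_eq_if_agree_off)
  show "finite {e \<in> edges G. is_loop G e}"
    using assms(1) by (simp add: finite_connected_graph_def)
qed (use assms in \<open>auto simp: finite_connected_graph_def\<close>)

end
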